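(* Let $\delta,\alpha\geq0$, $\sigma\in\mathbb{R}$, $\varepsilon\in(0,1)$, and assume $\delta\leq\theta\leq\alpha$. Let $\widehat{v}(t,\xi)$ solve $(1+|\xi|^{2\delta})\widehat{v}_{tt}+|\xi|^{2\theta}\widehat{v}_t+|\xi|^{2\alpha}\widehat{v}=0$, and define for $|\xi|\geq\varepsilon$ $$\rho(\xi)=\begin{cases}\dfrac{\varepsilon^{2\alpha+2\delta-4\theta}|\xi|^{2\theta}}{2(1+|\xi|^{2\delta})}&\text{if }\alpha+\delta\geq2\theta,\\[2mm] \dfrac{\varepsilon^{-2\alpha+4\theta}|\xi|^{2\alpha-2\theta}}{4}&\text{if }\alpha+\delta<2\theta,\end{cases}$$ $E_1(t,\xi)=\frac12|\xi|^{2\delta+\sigma}|\widehat{v}_t|^2+\frac12|\xi|^{2\alpha+\sigma}|\widehat{v}|^2$ and $F(t,\xi)=|\xi|^{2\theta+\sigma}|\widehat{v}_t|^2+\rho(\xi)|\xi|^{2\alpha+\sigma}|\widehat{v}|^2$. Then $E_1(t,\xi)\lesssim F(t,\xi)$ for all $t\geq0$ and $|\xi|\geq\varepsilon$.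
   Context: $\lesssim$ means $\leq C\cdot$ with $C>0$ independent of $t$ and $\xi$. *)

theory Defs
  imports "HOL-Analysis.Analysis"
begin

definition rho :: "real \<Rightarrow> real \<Rightarrow> real \<Rightarrow> real \<Rightarrow> 'a::real_normed_vector \<Rightarrow> real" where
  "rho \<delta> \<theta> \<alpha> \<epsilon> \<xi> =
     (if \<alpha> + \<delta> \<ge> 2 * \<theta>
      then \<epsilon> powr (2*\<alpha> + 2*\<delta> - 4*\<theta>) * norm \<xi> powr (2*\<theta>) / (2 * (1 + norm \<xi> powr (2*\<delta>)))
      else \<epsilon> powr (-2*\<alpha> + 4*\<theta>) * norm \<xi> powr (2*\<alpha> - 2*\<theta>) / 4)"

definition E1 :: "real \<Rightarrow> real \<Rightarrow> real \<Rightarrow> 'a::real_normed_vector \<Rightarrow> complex \<Rightarrow> complex \<Rightarrow> real" where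
  "E1 \<delta> \<alpha> \<sigma> \<xi> v vt =
     1/2 * norm \<xi> powr (2*\<delta> + \<sigma>) * (cmod vt)^2 + 1/2 * norm \<xi> powr (2*\<alpha> + \<sigma>) * (cmod v)^2"

definition Fen :: "real \<Rightarrow> real \<Rightarrow> real \<Rightarrow> real \<Rightarrow> real \<Rightarrow> 'a::real_normed_vector \<Rightarrow> complex \<Rightarrow> complex \<Rightarrow> real" where
  "Fen \<delta> \<theta> \<alpha> \<sigma> \<epsilon> \<xi> v vt =
     norm \<xi> powr (2*\<theta> + \<sigma>) * (cmod vt)^2 + rho \<delta> \<theta> \<alpha> \<epsilon> \<xi> * norm \<xi> powr (2*\<alpha> + \<sigma>) * (cmod v)^2"

end

theory Submission
  imports Defs
begin

text \<open>Both energies are weighted sums of the same two squares, so it suffices to compare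
  the weights: for \<open>|\<xi>| \<ge> \<epsilon>\<close> one has \<open>|\<xi>|^(2\<delta>) \<le> \<epsilon>^(2\<delta>-2\<theta>) |\<xi>|^(2\<theta>)\<close>
  because \<open>\<delta> \<le> \<theta>\<close>, and \<open>\<rho>\<close> is bounded below by a positive constant there.\<close>

lemma powr_le_powr_times_powr_diff:
  fixes r \<epsilon> a b :: real
  assumes "0 < \<epsilon>" "\<epsilon> \<le> r" "a \<le> b"
  shows "r powr a \<le> \<epsilon> powr (a - b) * r powr b"
proof -
  have "r powr a = r powr (a - b) * r powr b"
    by (simp add: powr_add[symmetric])
  also have "\<dots> \<le> \<epsilon> powr (a - b) * r powr b"
    using assms by (intro mult_right_mono powr_mono2') auto
  finally show ?thesis .
qed

lemma powr_div_one_plus_powr_lower_bound: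
  fixes r \<epsilon> c d :: real
  assumes "0 < \<epsilon>" "\<epsilon> \<le> 1" "\<epsilon> \<le> r" "0 \<le> d" "d \<le> c"
  shows "\<epsilon> powr c / 2 \<le> r powr c / (1 + r powr d)"
proof (cases "1 \<le> r")
  case True
  have "1 + r powr d \<le> 2 * r powr c"
    using True assms powr_mono[of d c r] ge_one_powr_ge_zero[of r c] by linarith
  hence "1/2 \<le> r powr c / (1 + r powr d)"
    by (simp add: field_simps add_pos_nonneg)
  moreover have "\<epsilon> powr c \<le> 1" using assms by (simp add: powr_le1)
  ultimately show ?thesis by linarith
next
  case False
  have "\<epsilon> powr c / 2 \<le> r powr c / 2"
    using assms by (simp add: powr_mono2)
  also have "\<dots> \<le> r powr c / (1 + r powr d)"
    using False assms by (intro divide_left_mono) (auto simp: powr_le1 add_pos_nonneg)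
  finally show ?thesis .
qed

lemma rho_lower_bound:
  fixes \<delta> \<alpha> \<theta> \<epsilon> :: real
  assumes "0 \<le> \<delta>" "0 < \<epsilon>" "\<epsilon> < 1" "\<delta> \<le> \<theta>" "\<theta> \<le> \<alpha>"
  shows "\<exists>m>0. \<forall>\<xi>::'a::real_normed_vector. \<epsilon> \<le> norm \<xi> \<longrightarrow> m \<le> rho \<delta> \<theta> \<alpha> \<epsilon> \<xi>"
proof (cases "2 * \<theta> \<le> \<alpha> + \<delta>")
  case True
  define K where "K = \<epsilon> powr (2*\<alpha> + 2*\<delta> - 4*\<theta>)"
  have K: "0 < K" unfolding K_def using assms by simp
  show ?thesis
  proof (intro exI[of _ "K * (\<epsilon> powr (2*\<theta>) / 2) / 2"] conjI allI impI)
    show "0 < K * (\<epsilon> powr (2*\<theta>) / 2) / 2" using K assms by simp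
    fix \<xi> :: 'a assume "\<epsilon> \<le> norm \<xi>"
    hence "\<epsilon> powr (2*\<theta>) / 2 \<le> norm \<xi> powr (2*\<theta>) / (1 + norm \<xi> powr (2*\<delta>))"
      using assms by (intro powr_div_one_plus_powr_lower_bound) auto
    hence "K * (\<epsilon> powr (2*\<theta>) / 2) / 2
        \<le> K * (norm \<xi> powr (2*\<theta>) / (1 + norm \<xi> powr (2*\<delta>))) / 2"
      using K by (intro divide_right_mono mult_left_mono) auto
    also have "\<dots> = rho \<delta> \<theta> \<alpha> \<epsilon> \<xi>"
      unfolding rho_def K_def using True by simp
    finally show "K * (\<epsilon> powr (2*\<theta>) / 2) / 2 \<le> rho \<delta> \<theta> \<alpha> \<epsilon> \<xi>" .
  qed
next
  case False
  define K where "K = \<epsilon> powr (-2*\<alpha> + 4*\<theta>)"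
  have K: "0 < K" unfolding K_def using assms by simp
  show ?thesis
  proof (intro exI[of _ "K * \<epsilon> powr (2*\<alpha> - 2*\<theta>) / 4"] conjI allI impI)
    show "0 < K * \<epsilon> powr (2*\<alpha> - 2*\<theta>) / 4" using K assms by simp
    fix \<xi> :: 'a assume "\<epsilon> \<le> norm \<xi>"
    hence "K * \<epsilon> powr (2*\<alpha> - 2*\<theta>) / 4 \<le> K * norm \<xi> powr (2*\<alpha> - 2*\<theta>) / 4"
      using K assms by (intro divide_right_mono mult_left_mono powr_mono2) auto
    also have "\<dots> = rho \<delta> \<theta> \<alpha> \<epsilon> \<xi>"
      unfolding rho_def K_def using False by simp
    finally show "K * \<epsilon> powr (2*\<alpha> - 2*\<theta>) / 4 \<le> rho \<delta> \<theta> \<alpha> \<epsilon> \<xi>" .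
  qed
qed

lemma E1_le_Fen:
  fixes \<delta> \<alpha> \<theta> \<sigma> \<epsilon> m :: real and \<xi> :: "'a::real_normed_vector"
  assumes "0 < \<epsilon>" "\<epsilon> \<le> norm \<xi>" "\<delta> \<le> \<theta>" "0 < m" "m \<le> rho \<delta> \<theta> \<alpha> \<epsilon> \<xi>"
  shows "E1 \<delta> \<alpha> \<sigma> \<xi> v vt \<le> max (\<epsilon> powr (2*\<delta> - 2*\<theta>)) (1/m) * Fen \<delta> \<theta> \<alpha> \<sigma> \<epsilon> \<xi> v vt"
proof -
  define C where "C = max (\<epsilon> powr (2*\<delta> - 2*\<theta>)) (1/m)"
  let ?r = "norm \<xi>"
  have "?r powr (2*\<delta>) \<le> \<epsilon> powr (2*\<delta> - 2*\<theta>) * ?r powr (2*\<theta>)"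
    using assms by (intro powr_le_powr_times_powr_diff) auto
  also have "\<dots> \<le> C * ?r powr (2*\<theta>)"
    unfolding C_def by (intro mult_right_mono) auto
  finally have "?r powr (2*\<delta>) * ?r powr \<sigma> \<le> C * ?r powr (2*\<theta>) * ?r powr \<sigma>"
    by (intro mult_right_mono) auto
  hence "?r powr (2*\<delta> + \<sigma>) * (cmod vt)^2 \<le> C * ?r powr (2*\<theta> + \<sigma>) * (cmod vt)^2"
    by (intro mult_right_mono) (auto simp: powr_add)
  moreover have "0 \<le> ?r powr (2*\<delta> + \<sigma>) * (cmod vt)^2" by simp
  ultimately have vt_term:
    "1/2 * ?r powr (2*\<delta> + \<sigma>) * (cmod vt)^2 \<le> C * (?r powr (2*\<theta> + \<sigma>) * (cmod vt)^2)"
    unfolding mult.assoc by linarith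
  have "1 = (1/m) * m" using assms by simp
  also have "\<dots> \<le> C * rho \<delta> \<theta> \<alpha> \<epsilon> \<xi>"
    using assms unfolding C_def by (intro mult_mono) (auto simp: le_max_iff_disj)
  finally have "1/2 * (?r powr (2*\<alpha> + \<sigma>) * (cmod v)^2)
      \<le> C * rho \<delta> \<theta> \<alpha> \<epsilon> \<xi> * (?r powr (2*\<alpha> + \<sigma>) * (cmod v)^2)"
    by (intro mult_right_mono) auto
  hence v_term: "1/2 * ?r powr (2*\<alpha> + \<sigma>) * (cmod v)^2
      \<le> C * (rho \<delta> \<theta> \<alpha> \<epsilon> \<xi> * ?r powr (2*\<alpha> + \<sigma>) * (cmod v)^2)"
    by (simp add: mult_ac)
  show ?thesis
    using add_mono[OF vt_term v_term]
    unfolding E1_def Fen_def C_def[symmetric] by (simp add: distrib_left)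
qed

theorem lemma3p3:
  fixes \<delta> \<alpha> \<theta> \<sigma> \<epsilon> :: real
    and v vt vtt :: "real \<Rightarrow> real ^ 'n \<Rightarrow> complex"
  assumes "\<delta> \<ge> 0" and "\<alpha> \<ge> 0" and "0 < \<epsilon>" and "\<epsilon> < 1"
    and "\<delta> \<le> \<theta>" and "\<theta> \<le> \<alpha>"
    and "\<And>t \<xi>. t \<ge> 0 \<Longrightarrow> ((\<lambda>s. v s \<xi>) has_vector_derivative vt t \<xi>) (at t within {0..})"
    and "\<And>t \<xi>. t \<ge> 0 \<Longrightarrow> ((\<lambda>s. vt s \<xi>) has_vector_derivative vtt t \<xi>) (at t within {0..})"
    and "\<And>t \<xi>. t \<ge> 0 \<Longrightarrow>
           complex_of_real (1 + norm \<xi> powr (2*\<delta>)) * vtt t \<xi>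
           + complex_of_real (norm \<xi> powr (2*\<theta>)) * vt t \<xi>
           + complex_of_real (norm \<xi> powr (2*\<alpha>)) * v t \<xi> = 0"
  shows "\<exists>C>0. \<forall>t \<ge> 0. \<forall>\<xi>::real^'n. norm \<xi> \<ge> \<epsilon> \<longrightarrow>
           E1 \<delta> \<alpha> \<sigma> \<xi> (v t \<xi>) (vt t \<xi>) \<le> C * Fen \<delta> \<theta> \<alpha> \<sigma> \<epsilon> \<xi> (v t \<xi>) (vt t \<xi>)"
proof -
  obtain m where "0 < m" and m: "\<And>\<xi>::real^'n. \<epsilon> \<le> norm \<xi> \<Longrightarrow> m \<le> rho \<delta> \<theta> \<alpha> \<epsilon> \<xi>"
    using rho_lower_bound[OF assms(1,3,4,5,6)] by blast
  show ?thesis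
  proof (intro exI[of _ "max (\<epsilon> powr (2*\<delta> - 2*\<theta>)) (1/m)"] conjI allI impI)
    show "0 < max (\<epsilon> powr (2*\<delta> - 2*\<theta>)) (1/m)"
      using \<open>0 < \<epsilon>\<close> by (simp add: less_max_iff_disj)
    fix t :: real and \<xi> :: "real^'n"
    assume "\<epsilon> \<le> norm \<xi>"
    then show "E1 \<delta> \<alpha> \<sigma> \<xi> (v t \<xi>) (vt t \<xi>)
        \<le> max (\<epsilon> powr (2*\<delta> - 2*\<theta>)) (1/m) * Fen \<delta> \<theta> \<alpha> \<sigma> \<epsilon> \<xi> (v t \<xi>) (vt t \<xi>)"
      using E1_le_Fen \<open>0 < \<epsilon>\<close> \<open>\<delta> \<le> \<theta>\<close> \<open>0 < m\<close> m by blast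
  qed
qed

end
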